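(* Let $E$ be the elliptic curve $Y^2+11Y=X^3+11X^2+33X$ over $\mathbb{Q}$ and $t=Y-\frac{11}{X}$. For every point $P=(x,y)\in E(\mathbb{Q})$ with $x\neq 0$, we have $H_X(P)\le 7\,H_t(P)^{2/3}$, i.e. $h_X(P)\le \tfrac23 h_t(P)+\log 7$. More precisely, for every finite prime $p$, $\max(1,|x|_p)\le \max(1,|y-\tfrac{11}{x}|_p)^{2/3}$, and at the archimedean place $\max(1,|x|)\le 7\max(1,|y-\tfrac{11}{x}|)^{2/3}$.
   Context: For a non-constant function $f$ on $E$ and $P\in E(\mathbb{Q})$ with $f(P)$ finite, $H_f(P)=\prod_{p\le\infty}\max(1,|f(P)|_p)$ and $h_f(P)=\log H_f(P)$. *)

theory Defs
  imports Complex_Main "HOL-Computational_Algebra.Primes"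
begin

definition padic_val_rat :: "nat \<Rightarrow> rat \<Rightarrow> int" where
  "padic_val_rat p q = (case quotient_of q of (a, b) \<Rightarrow>
      int (multiplicity (int p) a) - int (multiplicity (int p) b))"

definition padic_abs :: "nat \<Rightarrow> rat \<Rightarrow> real" where
  "padic_abs p q = (if q = 0 then 0 else real p powr (- real_of_int (padic_val_rat p q)))"

text \<open>Multiplicative height of a rational value f(P):
  H = prod over all places p (finite primes and infinity) of max(1, |f(P)|_p).\<close>
definition height_rat :: "rat \<Rightarrow> real" where
  "height_rat q = max 1 \<bar>real_of_rat q\<bar> *
     (\<Prod>p \<in> {p::nat. prime p \<and> max 1 (padic_abs p q) \<noteq> 1}. max 1 (padic_abs p q))"

definition on_E :: "rat \<Rightarrow> rat \<Rightarrow> bool" where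
  "on_E x y \<longleftrightarrow> y^2 + 11 * y = x^3 + 11 * x^2 + 33 * x"

end

theory Submission
  imports Defs
begin

(* Write t = y - 11/x.  The height H(q) is a product of local factors
   max(1,|q|_v), so the global bound H_X <= 7 H_t^(2/3) follows from local bounds
   max(1,|x|_p) <= max(1,|t|_p)^(2/3) at every prime and
   max(1,|x|) <= 7 max(1,|t|)^(2/3) at infinity (lemma height_le_of_local_bounds).

   p-adic places: write x = a/b, y = c/d in lowest terms.  Clearing denominators in the
   curve equation gives c(c + 11d) b^3 = (a^3 + 11a^2 b + 33ab^2) d^2.  If p divides b,
   then p divides neither a, c, c + 11d nor the cubic factor, so p divides d and
   3 v_p(b) = 2 v_p(d); moreover t = (ca - 11bd)/(da) with p not dividing ca - 11bd, so
   |t|_p = p^(v_p d) and |x|_p = p^(v_p b) = |t|_p^(2/3).  If p does not divide b then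
   |x|_p <= 1 and there is nothing to prove.

   Archimedean place: if |x| > 7 then completing the square shows x > 7 and
   (y + 11/2)^2 >= x^3 + 25, whence |t| >= |y + 11/2|/4 and t^2 >= (x/7)^3. *)

section \<open>Valuations and absolute values of rationals\<close>

lemma padic_val_rat_quotient:
  assumes "quotient_of q = (a, b)"
  shows "padic_val_rat p q = int (multiplicity (int p) a) - int (multiplicity (int p) b)"
  using assms unfolding padic_val_rat_def by simp

lemma padic_val_rat_frac:
  assumes p: "prime p" and c: "c \<noteq> 0" and d: "d \<noteq> 0"
  shows "padic_val_rat p (of_int c / of_int d)
           = int (multiplicity (int p) c) - int (multiplicity (int p) d)"
proof -
  obtain a b where ab: "quotient_of (of_int c / of_int d) = (a, b)" by fastforce
  have q: "of_int c / of_int d = (of_int a / of_int b :: rat)" using quotient_of_div[OF ab] .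
  have b: "b > 0" using quotient_of_denom_pos[OF ab] .
  have "(of_int c * of_int b :: rat) = of_int a * of_int d" using q b d
    by (simp add: field_simps)
  hence cross: "c * b = a * d" by (metis of_int_eq_iff of_int_mult)
  have a: "a \<noteq> 0" using cross c b d by auto
  have pe: "prime_elem (int p)" using p by simp
  have "multiplicity (int p) (c * b) = multiplicity (int p) (a * d)" using cross by simp
  hence "multiplicity (int p) c + multiplicity (int p) b
           = multiplicity (int p) a + multiplicity (int p) d"
    using prime_elem_multiplicity_mult_distrib[OF pe] a b c d by simp
  thus ?thesis unfolding padic_val_rat_def ab by simp
qed

lemma padic_abs_of_val:
  assumes "q \<noteq> 0" and "padic_val_rat p q = - int n"
  shows "padic_abs p q = real p powr real n"
  using assms unfolding padic_abs_def by simp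

lemma padic_abs_le_one:
  assumes p: "prime p" and ab: "quotient_of q = (a, b)" and nd: "\<not> int p dvd b"
  shows "padic_abs p q \<le> 1"
proof -
  have "multiplicity (int p) b = 0" using nd by (rule not_dvd_imp_multiplicity_0)
  hence "padic_val_rat p q \<ge> 0" using padic_val_rat_quotient[OF ab] by simp
  moreover have "real p \<ge> 1" using p prime_ge_1_nat by auto
  ultimately have "real p powr (- real_of_int (padic_val_rat p q)) \<le> real p powr 0"
    by (intro powr_mono) auto
  thus ?thesis unfolding padic_abs_def using \<open>real p \<ge> 1\<close> by auto
qed

(* Only finitely many primes contribute to the height: they all divide the denominator. *)
lemma finite_contributing_primes:
  "finite {p::nat. prime p \<and> max 1 (padic_abs p q) \<noteq> 1}"
proof -
  obtain a b where ab: "quotient_of q = (a, b)" by fastforce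
  have b: "b > 0" using quotient_of_denom_pos[OF ab] .
  have "{p::nat. prime p \<and> max 1 (padic_abs p q) \<noteq> 1} \<subseteq> {..nat b}"
  proof
    fix p assume "p \<in> {p::nat. prime p \<and> max 1 (padic_abs p q) \<noteq> 1}"
    hence p: "prime p" and ne: "max 1 (padic_abs p q) \<noteq> 1" by auto
    have "int p dvd b" using padic_abs_le_one[OF p ab] ne by (cases "int p dvd b") auto
    hence "int p \<le> b" using b zdvd_imp_le by blast
    thus "p \<in> {..nat b}" by simp
  qed
  thus ?thesis using finite_subset by blast
qed

section \<open>From local bounds to a height bound\<close>

lemma height_le_of_local_bounds:
  fixes q r :: rat and e C :: real
  assumes e: "e \<ge> 0"
    and local: "\<And>p. prime p \<Longrightarrow> max 1 (padic_abs p q) \<le> max 1 (padic_abs p r) powr e"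
    and arch: "max 1 \<bar>real_of_rat q\<bar> \<le> C * max 1 \<bar>real_of_rat r\<bar> powr e"
  shows "height_rat q \<le> C * height_rat r powr e"
proof -
  define Sq where "Sq = {p::nat. prime p \<and> max 1 (padic_abs p q) \<noteq> 1}"
  define Sr where "Sr = {p::nat. prime p \<and> max 1 (padic_abs p r) \<noteq> 1}"
  have ge1: "\<And>z::real. 1 \<le> max 1 z powr e" using e by (simp add: ge_one_powr_ge_zero)
  have sub: "Sq \<subseteq> Sr"
  proof
    fix p assume "p \<in> Sq"
    hence p: "prime p" and "1 < max 1 (padic_abs p q)" unfolding Sq_def by auto
    hence "1 < max 1 (padic_abs p r) powr e" using local[OF p] by linarith
    hence "max 1 (padic_abs p r) \<noteq> 1" by auto
    thus "p \<in> Sr" using p unfolding Sr_def by auto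
  qed
  have "(\<Prod>p\<in>Sq. max 1 (padic_abs p q)) \<le> (\<Prod>p\<in>Sq. max 1 (padic_abs p r) powr e)"
    using local unfolding Sq_def by (intro prod_mono) auto
  also have "\<dots> \<le> (\<Prod>p\<in>Sr. max 1 (padic_abs p r) powr e)"
    using finite_contributing_primes sub ge1 unfolding Sr_def by (intro prod_mono2) auto
  also have "\<dots> = (\<Prod>p\<in>Sr. max 1 (padic_abs p r)) powr e"
    by (simp add: prod_powr_distrib)
  finally have finite_part:
    "(\<Prod>p\<in>Sq. max 1 (padic_abs p q)) \<le> (\<Prod>p\<in>Sr. max 1 (padic_abs p r)) powr e" .
  have "height_rat q = max 1 \<bar>real_of_rat q\<bar> * (\<Prod>p\<in>Sq. max 1 (padic_abs p q))"
    unfolding height_rat_def Sq_def ..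
  also have "\<dots> \<le> (C * max 1 \<bar>real_of_rat r\<bar> powr e)
                    * (\<Prod>p\<in>Sr. max 1 (padic_abs p r)) powr e"
    using arch finite_part by (intro mult_mono) (auto intro: prod_nonneg order_trans[OF _ arch])
  also have "\<dots> = C * (max 1 \<bar>real_of_rat r\<bar> * (\<Prod>p\<in>Sr. max 1 (padic_abs p r))) powr e"
    by (simp add: powr_mult prod_nonneg)
  also have "\<dots> = C * height_rat r powr e"
    unfolding height_rat_def Sr_def ..
  finally show ?thesis .
qed

section \<open>The p-adic places\<close>

lemma on_E_cleared:
  assumes E: "on_E x y" and xab: "x = of_int a / of_int b" and ycd: "y = of_int c / of_int d"
    and b: "b \<noteq> 0" and d: "d \<noteq> 0"
  shows "c * (c + 11 * d) * b ^ 3 = (a ^ 3 + 11 * a ^ 2 * b + 33 * a * b ^ 2) * d ^ 2"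
proof -
  have cy: "of_int c = y * of_int d" and ax: "of_int a = x * of_int b"
    using xab ycd b d by auto
  have "(of_int (c * (c + 11 * d) * b ^ 3) :: rat)
          = (y^2 + 11*y) * (of_int b^3 * of_int d^2)"
    unfolding of_int_mult of_int_add of_int_power of_int_numeral cy
    by (simp add: power2_eq_square power3_eq_cube algebra_simps)
  also have "\<dots> = (x^3 + 11*x^2 + 33*x) * (of_int b^3 * of_int d^2)"
    using E unfolding on_E_def by simp
  also have "\<dots> = of_int ((a ^ 3 + 11 * a ^ 2 * b + 33 * a * b ^ 2) * d ^ 2)"
    unfolding of_int_add of_int_mult of_int_power of_int_numeral ax
    by (simp add: power2_eq_square power3_eq_cube algebra_simps)
  finally show ?thesis by (rule of_int_eq_iff[THEN iffD1])
qed

lemma prime_not_dvd_both: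
  fixes c d :: int
  assumes "coprime c d" and "prime p" and "p dvd d" shows "\<not> p dvd c"
  using assms coprime_common_divisor not_prime_unit by blast

lemma denominators_at_bad_prime:
  fixes a b c d :: int
  assumes eq: "c * (c + 11 * d) * b ^ 3 = (a ^ 3 + 11 * a ^ 2 * b + 33 * a * b ^ 2) * d ^ 2"
    and cab: "coprime a b" and ccd: "coprime c d" and b: "b \<noteq> 0" and d: "d \<noteq> 0"
    and p: "prime p" and pb: "p dvd b"
  shows "\<not> p dvd a" and "\<not> p dvd c"
    and "3 * multiplicity p b = 2 * multiplicity p d"
proof -
  define A where "A = a ^ 3 + 11 * a ^ 2 * b + 33 * a * b ^ 2"
  have pe: "prime_elem p" using p by (rule prime_imp_prime_elem)
  show pna: "\<not> p dvd a" using prime_not_dvd_both[OF cab p pb] .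
  have pnA: "\<not> p dvd A"
  proof
    assume "p dvd A"
    moreover have "p dvd 11 * a ^ 2 * b + 33 * a * b ^ 2" using pb
      by (intro dvd_add) (simp_all add: power2_eq_square)
    ultimately have "p dvd A - (11 * a ^ 2 * b + 33 * a * b ^ 2)" by (rule dvd_diff)
    hence "p dvd a ^ 3" unfolding A_def by simp
    thus False using pna p prime_dvd_power by blast
  qed
  have "p dvd A * d ^ 2" unfolding A_def eq[symmetric] using pb by (simp add: power3_eq_cube)
  hence pd: "p dvd d" using pnA p prime_dvd_multD prime_dvd_power by blast
  show pnc: "\<not> p dvd c" using prime_not_dvd_both[OF ccd p pd] .
  have pnc11: "\<not> p dvd c + 11 * d"
    using pnc pd by (metis dvd_add_left_iff dvd_mult)
  have c0: "c \<noteq> 0" and c11: "c + 11 * d \<noteq> 0" and A0: "A \<noteq> 0"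
    using pnc pnc11 pnA by auto
  have "multiplicity p (c * (c + 11 * d) * b ^ 3) = 3 * multiplicity p b"
    using pnc pnc11 b c0 c11
    by (simp add: prime_elem_multiplicity_mult_distrib[OF pe]
          prime_elem_multiplicity_power_distrib[OF pe] not_dvd_imp_multiplicity_0)
  moreover have "multiplicity p (A * d ^ 2) = 2 * multiplicity p d"
    using pnA d A0
    by (simp add: prime_elem_multiplicity_mult_distrib[OF pe]
          prime_elem_multiplicity_power_distrib[OF pe] not_dvd_imp_multiplicity_0)
  ultimately show "3 * multiplicity p b = 2 * multiplicity p d" using eq unfolding A_def by simp
qed

lemma padic_abs_at_denominator_prime:
  assumes E: "on_E x y" and x0: "x \<noteq> 0" and p: "prime p"
    and ab: "quotient_of x = (a, b)" and cd: "quotient_of y = (c, d)" and pb: "int p dvd b"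
  shows "padic_abs p x = real p powr real (multiplicity (int p) b)"
    and "padic_abs p (y - 11 / x) = real p powr real (multiplicity (int p) d)"
    and "3 * multiplicity (int p) b = 2 * multiplicity (int p) d"
proof -
  have b: "b > 0" and d: "d > 0"
    using quotient_of_denom_pos[OF ab] quotient_of_denom_pos[OF cd] .
  have xab: "x = of_int a / of_int b" and ycd: "y = of_int c / of_int d"
    using quotient_of_div[OF ab] quotient_of_div[OF cd] .
  have a0: "a \<noteq> 0" using x0 xab by auto
  have pi: "prime (int p)" and pe: "prime_elem (int p)" using p by simp_all
  have eq: "c * (c + 11 * d) * b ^ 3 = (a ^ 3 + 11 * a ^ 2 * b + 33 * a * b ^ 2) * d ^ 2"
    using on_E_cleared[OF E xab ycd] b d by simp
  note bad = denominators_at_bad_prime[OF eq quotient_of_coprime[OF ab]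
               quotient_of_coprime[OF cd] _ _ pi pb]
  have pna: "\<not> int p dvd a" and pnc: "\<not> int p dvd c"
    using bad b d by auto
  show "3 * multiplicity (int p) b = 2 * multiplicity (int p) d"
    using bad b d by auto
  show "padic_abs p x = real p powr real (multiplicity (int p) b)"
    using padic_val_rat_quotient[OF ab] pna x0
    by (intro padic_abs_of_val) (simp_all add: not_dvd_imp_multiplicity_0)
  define N where "N = c * a - 11 * b * d"
  have tN: "y - 11 / x = of_int N / of_int (d * a)"
    unfolding N_def xab ycd using a0 b d by (simp add: field_simps)
  have pnN: "\<not> int p dvd N"
  proof
    assume "int p dvd N"
    moreover have "int p dvd 11 * b * d" using pb by simp
    ultimately have "int p dvd N + 11 * b * d" by (rule dvd_add)
    hence "int p dvd c * a" unfolding N_def by simp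
    thus False using pna pnc pi prime_dvd_mult_iff by blast
  qed
  have N0: "N \<noteq> 0" using pnN by auto
  show "padic_abs p (y - 11 / x) = real p powr real (multiplicity (int p) d)"
    unfolding tN using padic_val_rat_frac[OF p N0, of "d * a"] a0 d pnN pna N0
    by (intro padic_abs_of_val)
       (simp_all add: prime_elem_multiplicity_mult_distrib[OF pe] not_dvd_imp_multiplicity_0)
qed

lemma powr_two_thirds_of_exponents:
  fixes r :: real and B D :: nat
  assumes "3 * B = 2 * D"
  shows "(r powr real D) powr (2/3) = r powr real B"
proof -
  have "3 * real B = 2 * real D" using assms by (metis of_nat_mult of_nat_numeral)
  hence "real D * (2/3) = real B" by linarith
  thus ?thesis by (simp add: powr_powr)
qed

lemma local_bound_at_prime:
  assumes E: "on_E x y" and x0: "x \<noteq> 0" and p: "prime p"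
  shows "max 1 (padic_abs p x) \<le> max 1 (padic_abs p (y - 11 / x)) powr (2/3)"
proof -
  obtain a b where ab: "quotient_of x = (a, b)" by fastforce
  obtain c d where cd: "quotient_of y = (c, d)" by fastforce
  have p1: "real p \<ge> 1" using p prime_ge_1_nat by auto
  show ?thesis
  proof (cases "int p dvd b")
    case False
    then show ?thesis using padic_abs_le_one[OF p ab False] by (simp add: ge_one_powr_ge_zero)
  next
    case True
    note vals = padic_abs_at_denominator_prime[OF E x0 p ab cd True]
    have "max 1 (padic_abs p (y - 11 / x)) = padic_abs p (y - 11 / x)"
      using p1 unfolding vals(2) by (simp add: ge_one_powr_ge_zero)
    moreover have "padic_abs p (y - 11 / x) powr (2/3) = padic_abs p x"
      unfolding vals(1,2) by (rule powr_two_thirds_of_exponents[OF vals(3)])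
    moreover have "padic_abs p x \<ge> 1"
      using p1 unfolding vals(1) by (simp add: ge_one_powr_ge_zero)
    ultimately show ?thesis by simp
  qed
qed

section \<open>The archimedean place\<close>

(* On the real curve, a point with |u| > 7 lies on the right branch with y + 11/2 large:
   the shifted equation reads (w + 11/2)^2 = (u + 7)((u + 2)^2 + 1) - 19/4. *)
lemma real_point_far_out:
  fixes u w :: real
  assumes E: "w^2 + 11*w = u^3 + 11*u^2 + 33*u" and big: "\<bar>u\<bar> > 7"
  shows "u > 7" and "(w + 11/2)^2 \<ge> u^3 + 25"
proof -
  define s where "s = w + 11/2"
  have s2: "s^2 = (u + 7) * ((u + 2)^2 + 1) - 19/4" unfolding s_def using E
    by (simp add: power2_eq_square power3_eq_cube algebra_simps)
  show u7: "u > 7"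
  proof (rule ccontr)
    assume "\<not> u > 7"
    hence "u < -7" using big by auto
    hence "(u + 7) * ((u + 2)^2 + 1) \<le> 0" by (intro mult_nonpos_nonneg) auto
    moreover have "s^2 \<ge> 0" by simp
    ultimately show False using s2 by linarith
  qed
  have "s^2 = u^3 + 25 + (11*u^2 + 33*u) + 21/4" using s2
    by (simp add: power2_eq_square power3_eq_cube algebra_simps)
  moreover have "11*u^2 + 33*u \<ge> 0" using u7 by simp
  ultimately show "(w + 11/2)^2 \<ge> u^3 + 25" unfolding s_def by linarith
qed

lemma archimedean_bound_real:
  fixes u w :: real
  assumes E: "w^2 + 11*w = u^3 + 11*u^2 + 33*u" and u0: "u \<noteq> 0"
  shows "max 1 \<bar>u\<bar> \<le> 7 * max 1 \<bar>w - 11/u\<bar> powr (2/3)"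
proof (cases "\<bar>u\<bar> \<le> 7")
  case True
  then show ?thesis by (simp add: ge_one_powr_ge_zero order_trans[of _ 7])
next
  case False
  define t where "t = w - 11/u"
  define s where "s = w + 11/2"
  have u7: "u > 7" and s2: "s^2 \<ge> u^3 + 25"
    using real_point_far_out[OF E] False unfolding s_def by auto
  have "u^3 \<ge> 7^3" using u7 by (intro power_mono) auto
  hence "s^2 \<ge> 18^2" using s2 by simp
  hence s18: "\<bar>s\<bar> \<ge> 18" using abs_le_square_iff[of 18 s] by simp
  have "\<bar>11/u\<bar> \<le> 2" using u7 by (simp add: field_simps)
  moreover have "s = t + (11/2 + 11/u)" unfolding t_def s_def by simp
  ultimately have ts: "\<bar>t\<bar> \<ge> \<bar>s\<bar>/4" using s18 by linarith
  hence "(\<bar>s\<bar>/4)^2 \<le> \<bar>t\<bar>^2" by (intro power_mono) auto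
  hence "t^2 \<ge> s^2/16" by (simp add: power_divide)
  moreover have "(u/7)^3 = u^3/343" by (simp add: power_divide)
  moreover have "u^3 > 0" using u7 by simp
  ultimately have t2: "(u/7)^3 \<le> t^2" using s2 by linarith
  define z where "z = \<bar>t\<bar> powr (2/3)"
  have tpos: "\<bar>t\<bar> > 0" using ts s18 by simp
  have "z^3 = z powr real 3" using tpos by (simp add: z_def powr_realpow)
  also have "\<dots> = \<bar>t\<bar> powr real 2" unfolding z_def by (simp add: powr_powr)
  also have "\<dots> = t^2" using tpos by (simp add: powr_realpow)
  finally have "(u/7)^Suc 2 \<le> z^Suc 2" using t2 by (simp add: numeral_3_eq_3)
  hence "u/7 \<le> z" by (rule power_le_imp_le_base) (simp add: z_def)
  moreover have "z \<le> max 1 \<bar>t\<bar> powr (2/3)" unfolding z_def by (intro powr_mono2) auto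
  ultimately show ?thesis using u7 unfolding t_def by simp
qed

lemma archimedean_bound:
  assumes E: "on_E x y" and x0: "x \<noteq> 0"
  shows "max 1 \<bar>real_of_rat x\<bar> \<le> 7 * max 1 \<bar>real_of_rat (y - 11 / x)\<bar> powr (2/3)"
proof -
  have "real_of_rat (y^2 + 11*y) = real_of_rat (x^3 + 11*x^2 + 33*x)"
    using E unfolding on_E_def by simp
  hence "(real_of_rat y)^2 + 11 * real_of_rat y
           = (real_of_rat x)^3 + 11 * (real_of_rat x)^2 + 33 * real_of_rat x"
    by (simp add: of_rat_add of_rat_mult of_rat_power)
  moreover have "real_of_rat (y - 11/x) = real_of_rat y - 11 / real_of_rat x"
    by (simp add: of_rat_diff of_rat_divide)
  ultimately show ?thesis
    using archimedean_bound_real[of "real_of_rat y" "real_of_rat x"] x0 by simp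
qed

theorem mainTheorem5:
  fixes x y :: rat
  assumes "on_E x y" and "x \<noteq> 0"
  shows "height_rat x \<le> 7 * height_rat (y - 11 / x) powr (2/3)
       \<and> (\<forall>p::nat. prime p \<longrightarrow>
            max 1 (padic_abs p x) \<le> max 1 (padic_abs p (y - 11 / x)) powr (2/3))
       \<and> max 1 \<bar>real_of_rat x\<bar> \<le> 7 * max 1 \<bar>real_of_rat (y - 11 / x)\<bar> powr (2/3)"
proof -
  have local: "\<And>p. prime p \<Longrightarrow>
      max 1 (padic_abs p x) \<le> max 1 (padic_abs p (y - 11 / x)) powr (2/3)"
    using local_bound_at_prime assms by blast
  have arch: "max 1 \<bar>real_of_rat x\<bar> \<le> 7 * max 1 \<bar>real_of_rat (y - 11 / x)\<bar> powr (2/3)"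
    using archimedean_bound assms by blast
  have "height_rat x \<le> 7 * height_rat (y - 11 / x) powr (2/3)"
    using height_le_of_local_bounds[OF _ local arch] by simp
  with local arch show ?thesis by blast
qed

end
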